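(* Let $t\geq 5$ and let $H_t$ be the graph with vertices $u,v,w,b,a_1,\dots,a_{t-3}$ and edges $ua_i$ and $a_iv$ for $i=1,\dots,t-3$, edges $ub$ and $bw$, and two parallel edges joining $v$ and $w$. Then $L(H_t)$ has a $K_t$-minor but no $K_t$-immersion.
   Context: Graphs are finite and may have parallel edges but no loops. $L(H)$ is the simple graph with vertex set $E(H)$ in which two distinct edges of $H$ are adjacent iff they share at least one endpoint. A graph $G$ has a $K_t$-immersion if there is an injective map $\phi$ from the vertex set of $K_t$ to $V(G)$ and, for each pair $u\neq v$ of vertices of $K_t$, a path in $G$ joining $\phi(u)$ and $\phi(v)$, such that these paths are pairwise edge-disjoint. $G$ has a $K_t$-minor if $K_t$ can be obtained from a subgraph of $G$ by contracting edges. *)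

theory Defs
  imports Main
begin

section \<open>Simple graphs: vertex set V and edge set E of 2-element subsets\<close>

definition is_path :: "'a set \<Rightarrow> 'a set set \<Rightarrow> 'a list \<Rightarrow> bool" where
  "is_path V E p \<longleftrightarrow> p \<noteq> [] \<and> distinct p \<and> set p \<subseteq> V \<and>
     (\<forall>i. Suc i < length p \<longrightarrow> {p ! i, p ! Suc i} \<in> E)"

definition path_edges :: "'a list \<Rightarrow> 'a set set" where
  "path_edges p = {{p ! i, p ! Suc i} | i. Suc i < length p}"

definition has_K_immersion :: "'a set \<Rightarrow> 'a set set \<Rightarrow> nat \<Rightarrow> bool" where
  "has_K_immersion V E t \<longleftrightarrow> (\<exists>(\<phi>::nat \<Rightarrow> 'a) (P::nat \<Rightarrow> nat \<Rightarrow> 'a list).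
     inj_on \<phi> {..<t} \<and> \<phi> ` {..<t} \<subseteq> V \<and>
     (\<forall>i j. i < j \<and> j < t \<longrightarrow>
        is_path V E (P i j) \<and> hd (P i j) = \<phi> i \<and> last (P i j) = \<phi> j) \<and>
     (\<forall>i j k l. i < j \<and> j < t \<and> k < l \<and> l < t \<and> (i, j) \<noteq> (k, l) \<longrightarrow>
        path_edges (P i j) \<inter> path_edges (P k l) = {}))"

text \<open>Contraction of the edge {x,y}: y is merged into x (parallel edges merge, the edge
  {x,y} itself disappears, so the result is again simple).\<close>
definition contract :: "'a set \<Rightarrow> 'a set set \<Rightarrow> 'a \<Rightarrow> 'a \<Rightarrow> 'a set \<times> 'a set set" where
  "contract V E x y = (V - {y},
     {(\<lambda>z. if z = y then x else z) ` e | e. e \<in> E \<and> e \<noteq> {x, y}})"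

inductive contracts :: "'a set \<Rightarrow> 'a set set \<Rightarrow> 'a set \<Rightarrow> 'a set set \<Rightarrow> bool" where
  refl: "contracts V E V E"
| step: "\<lbrakk>{x, y} \<in> E; x \<noteq> y; contract V E x y = (V', E'); contracts V' E' V'' E''\<rbrakk>
          \<Longrightarrow> contracts V E V'' E''"

definition is_complete_on :: "'a set \<Rightarrow> 'a set set \<Rightarrow> nat \<Rightarrow> bool" where
  "is_complete_on V E t \<longleftrightarrow> finite V \<and> card V = t \<and>
     E = {{x, y} | x y. x \<in> V \<and> y \<in> V \<and> x \<noteq> y}"

definition has_K_minor :: "'a set \<Rightarrow> 'a set set \<Rightarrow> nat \<Rightarrow> bool" where
  "has_K_minor V E t \<longleftrightarrow> (\<exists>V1 E1 V2 E2. V1 \<subseteq> V \<and> E1 \<subseteq> E \<and> (\<forall>e\<in>E1. e \<subseteq> V1) \<and>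
     contracts V1 E1 V2 E2 \<and> is_complete_on V2 E2 t)"

section \<open>Line graph of a multigraph given by an edge set and an endpoint map\<close>

definition line_graph_E :: "'e set \<Rightarrow> ('e \<Rightarrow> 'v set) \<Rightarrow> 'e set set" where
  "line_graph_E Ed ends = {{e, f} | e f. e \<in> Ed \<and> f \<in> Ed \<and> e \<noteq> f \<and> ends e \<inter> ends f \<noteq> {}}"

datatype hvert = U | Vv | W | B | A nat

datatype hedge = UA nat | AV nat | UB | BW | VW1 | VW2

fun H_ends :: "hedge \<Rightarrow> hvert set" where
  "H_ends (UA i) = {U, A i}"
| "H_ends (AV i) = {A i, Vv}"
| "H_ends UB = {U, B}"
| "H_ends BW = {B, W}"
| "H_ends VW1 = {Vv, W}"
| "H_ends VW2 = {Vv, W}"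

definition H_edges :: "nat \<Rightarrow> hedge set" where
  "H_edges t = UA ` {1..t-3} \<union> AV ` {1..t-3} \<union> {UB, BW, VW1, VW2}"

end

theory Submission
  imports Defs
begin

text \<open>For the minor, contract the vertices \<open>ua\<^sub>i\<close> and \<open>bw\<close> of \<open>L(H\<^sub>t)\<close> into their common
  neighbour \<open>ub\<close>: the remaining \<open>t\<close> vertices \<open>ub\<close>, \<open>a\<^sub>iv\<close> and the two \<open>vw\<close>-edges form a
  clique, because all of them but \<open>ub\<close> contain \<open>v\<close>, and each of them meets one of the contracted
  edges. On the other hand, the branch vertices of a \<open>K\<^sub>t\<close>-immersion need degree at least
  \<open>t - 1\<close>, since the \<open>t - 1\<close> paths leaving a branch vertex start with pairwise distinct edges;
  in \<open>L(H\<^sub>t)\<close> only the \<open>t - 3\<close> edges \<open>a\<^sub>iv\<close> and the two \<open>vw\<close>-edges have that degree.\<close>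

lemma line_graph_E_doubleton_iff:
  "{a, b} \<in> line_graph_E Ed ends \<longleftrightarrow> a \<in> Ed \<and> b \<in> Ed \<and> a \<noteq> b \<and> ends a \<inter> ends b \<noteq> {}"
  unfolding line_graph_E_def by (auto simp: doubleton_eq_iff)

lemma line_graph_E_edgeE:
  assumes "e \<in> line_graph_E Ed ends"
  obtains a b where "e = {a, b}" "a \<in> Ed" "b \<in> Ed" "a \<noteq> b" "ends a \<inter> ends b \<noteq> {}"
  using assms unfolding line_graph_E_def by auto

lemma line_graph_E_edge: "e \<in> line_graph_E Ed ends \<Longrightarrow> e \<subseteq> Ed \<and> card e = 2"
  by (auto elim!: line_graph_E_edgeE)

lemma finite_line_graph_E: "finite Ed \<Longrightarrow> finite (line_graph_E Ed ends)"
  by (rule finite_subset[of _ "Pow Ed"]) (auto simp: line_graph_E_def)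

definition merge :: "'a set \<Rightarrow> 'a \<Rightarrow> 'a \<Rightarrow> 'a" where
  "merge Y x z = (if z \<in> Y then x else z)"

text \<open>Contracting the star from \<open>x\<close> to the vertices of \<open>Y\<close> identifies \<open>Y\<close> with \<open>x\<close>;
  edges collapsing to the loop \<open>{x}\<close> are dropped and parallel edges merge.\<close>
definition merge_edges :: "'a set \<Rightarrow> 'a \<Rightarrow> 'a set set \<Rightarrow> 'a set set" where
  "merge_edges Y x E = {merge Y x ` e | e. e \<in> E \<and> merge Y x ` e \<noteq> {x}}"

lemma merge_image_eq_singleton:
  assumes "card e = 2"
  shows "merge Y x ` e = {x} \<longleftrightarrow> e \<subseteq> insert x Y"
proof -
  obtain a b where "e = {a, b}" "a \<noteq> b"
    using assms by (auto simp: card_2_iff)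
  then show ?thesis
    by (auto simp: merge_def)
qed

lemma merge_edgesI: "e \<in> E \<Longrightarrow> merge Y x ` e = s \<Longrightarrow> s \<noteq> {x} \<Longrightarrow> s \<in> merge_edges Y x E"
  unfolding merge_edges_def by blast

lemma merge_singleton: "merge {y} x = (\<lambda>z. if z = y then x else z)"
  by (simp add: merge_def fun_eq_iff)

lemma card_merge_edges:
  assumes "\<forall>e\<in>E. card e = 2" "e' \<in> merge_edges Y x E"
  shows "card e' = 2"
proof -
  obtain e where "e \<in> E" "e' = merge Y x ` e" "e' \<noteq> {x}"
    using assms(2) unfolding merge_edges_def by blast
  moreover obtain a b where "e = {a, b}" "a \<noteq> b"
    using assms(1) \<open>e \<in> E\<close> by (meson card_2_iff)
  ultimately have "e' = {merge Y x a, merge Y x b}" "merge Y x a \<noteq> merge Y x b"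
    by (auto simp: merge_def split: if_splits)
  then show ?thesis
    by simp
qed

lemma merge_edges_empty:
  assumes "\<forall>e\<in>E. card e = 2"
  shows "merge_edges {} x E = E"
proof -
  have "e \<noteq> {x}" if "e \<in> E" for e
    using assms that by auto
  then show ?thesis
    by (auto simp: merge_edges_def merge_def)
qed

lemma contract_eq_merge_edges:
  assumes "\<forall>e\<in>E. card e = 2" "x \<noteq> y"
  shows "contract V E x y = (V - {y}, merge_edges {y} x E)"
proof -
  have "e \<noteq> {x, y} \<longleftrightarrow> merge {y} x ` e \<noteq> {x}" if "e \<in> E" for e
    using assms that merge_image_eq_singleton[of e "{y}" x]
    by (auto simp: card_2_iff doubleton_eq_iff)
  then have "{merge {y} x ` e | e. e \<in> E \<and> e \<noteq> {x, y}} = merge_edges {y} x E"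
    unfolding merge_edges_def by auto
  then show ?thesis
    unfolding contract_def merge_singleton by simp
qed

lemma merge_edges_insert:
  assumes "x \<notin> Y"
  shows "merge_edges Y x (merge_edges {y} x E) = merge_edges (insert y Y) x E"
proof -
  have comp: "merge Y x ` merge {y} x ` e = merge (insert y Y) x ` e" for e
    using assms by (auto simp: merge_def image_iff)
  show ?thesis
  proof (intro equalityI subsetI)
    fix s assume "s \<in> merge_edges Y x (merge_edges {y} x E)"
    then obtain e where "e \<in> E" "s = merge Y x ` merge {y} x ` e" "s \<noteq> {x}"
      unfolding merge_edges_def by blast
    then show "s \<in> merge_edges (insert y Y) x E"
      unfolding merge_edges_def comp by blast
  next
    fix s assume "s \<in> merge_edges (insert y Y) x E"
    then obtain e where "e \<in> E" "s = merge Y x ` merge {y} x ` e" "s \<noteq> {x}"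
      unfolding merge_edges_def comp by blast
    moreover from this have "merge {y} x ` e \<noteq> {x}"
      using assms by (auto simp: merge_def)
    ultimately show "s \<in> merge_edges Y x (merge_edges {y} x E)"
      unfolding merge_edges_def by blast
  qed
qed

lemma contracts_star:
  assumes "finite Y" "x \<notin> Y" "\<forall>y\<in>Y. {x, y} \<in> E" "\<forall>e\<in>E. card e = 2"
  shows "contracts V E (V - Y) (merge_edges Y x E)"
  using assms
proof (induction Y arbitrary: V E rule: finite_induct)
  case empty
  then show ?case
    by (simp add: merge_edges_empty contracts.refl)
next
  case (insert y Y)
  have "x \<noteq> y" "x \<notin> Y" "{x, y} \<in> E"
    using insert.prems by auto
  have star: "\<forall>z\<in>Y. {x, z} \<in> merge_edges {y} x E"
  proof
    fix z assume "z \<in> Y"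
    then have "{x, z} \<in> E" "merge {y} x ` {x, z} = {x, z}" "{x, z} \<noteq> {x}"
      using insert.prems insert.hyps(2) by (auto simp: merge_def)
    then show "{x, z} \<in> merge_edges {y} x E"
      by (rule merge_edgesI)
  qed
  have simple: "\<forall>e\<in>merge_edges {y} x E. card e = 2"
    using card_merge_edges[OF insert.prems(3)] by blast
  have "contracts (V - {y}) (merge_edges {y} x E) (V - {y} - Y) (merge_edges Y x (merge_edges {y} x E))"
    by (rule insert.IH[OF \<open>x \<notin> Y\<close> star simple])
  then show ?case
    using contracts.step[OF \<open>{x, y} \<in> E\<close> \<open>x \<noteq> y\<close> contract_eq_merge_edges[OF insert.prems(3) \<open>x \<noteq> y\<close>]]
    by (simp only: Diff_insert2[of V y Y] merge_edges_insert[OF \<open>x \<notin> Y\<close>])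
qed

lemma merge_edges_complete:
  assumes "\<forall>e\<in>E. e \<subseteq> V \<and> card e = 2" "x \<in> V" "x \<notin> Y"
    and clique: "\<forall>a\<in>V - Y - {x}. \<forall>b\<in>V - Y - {x}. a \<noteq> b \<longrightarrow> {a, b} \<in> E"
    and attached: "\<forall>b\<in>V - Y - {x}. \<exists>c\<in>insert x Y. {c, b} \<in> E"
  shows "merge_edges Y x E = {{a, b} | a b. a \<in> V - Y \<and> b \<in> V - Y \<and> a \<noteq> b}"
proof (intro equalityI subsetI)
  fix e' assume e': "e' \<in> merge_edges Y x E"
  then obtain e where "e \<in> E" "e' = merge Y x ` e"
    unfolding merge_edges_def by blast
  moreover have "merge Y x ` V \<subseteq> V - Y"
    using assms(2,3) by (auto simp: merge_def)
  ultimately have "e' \<subseteq> V - Y"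
    using assms(1) by blast
  moreover obtain a b where "e' = {a, b}" "a \<noteq> b"
    using card_merge_edges[OF _ e'] assms(1) by (meson card_2_iff)
  ultimately show "e' \<in> {{a, b} | a b. a \<in> V - Y \<and> b \<in> V - Y \<and> a \<noteq> b}"
    by blast
next
  have edge: "{a, b} \<in> merge_edges Y x E" if "a \<in> V - Y" "b \<in> V - Y - {x}" "a \<noteq> b" for a b
  proof (cases "a = x")
    case True
    with that attached obtain c where "c \<in> insert x Y" "{c, b} \<in> E"
      by blast
    moreover from this(1) have "merge Y x ` {c, b} = {a, b}"
      using True that \<open>x \<notin> Y\<close> by (auto simp: merge_def)
    ultimately show ?thesis
      using merge_edgesI[of "{c, b}" E Y x "{a, b}"] that by auto
  next
    case False
    then have "{a, b} \<in> E" "merge Y x ` {a, b} = {a, b}"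
      using that clique by (auto simp: merge_def)
    then show ?thesis
      by (rule merge_edgesI) (use that in auto)
  qed
  fix e' assume "e' \<in> {{a, b} | a b. a \<in> V - Y \<and> b \<in> V - Y \<and> a \<noteq> b}"
  then obtain a b where "e' = {a, b}" "a \<in> V - Y" "b \<in> V - Y" "a \<noteq> b"
    by blast
  then show "e' \<in> merge_edges Y x E"
    using edge[of a b] edge[of b a] by (cases "b = x") (auto simp: insert_commute)
qed

lemma has_K_minor_contract_star:
  assumes "finite V" "\<forall>e\<in>E. e \<subseteq> V \<and> card e = 2" "finite Y" "x \<in> V" "x \<notin> Y"
    and "\<forall>y\<in>Y. {x, y} \<in> E"
    and "\<forall>a\<in>V - Y - {x}. \<forall>b\<in>V - Y - {x}. a \<noteq> b \<longrightarrow> {a, b} \<in> E"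
    and "\<forall>b\<in>V - Y - {x}. \<exists>c\<in>insert x Y. {c, b} \<in> E"
  shows "has_K_minor V E (card (V - Y))"
proof -
  have "contracts V E (V - Y) (merge_edges Y x E)"
    using assms by (intro contracts_star) auto
  moreover have "is_complete_on (V - Y) (merge_edges Y x E) (card (V - Y))"
    unfolding is_complete_on_def using assms merge_edges_complete[of E V x Y] by simp
  ultimately show ?thesis
    unfolding has_K_minor_def using assms(2) by blast
qed

lemma K_minor_H:
  assumes "t \<ge> 5"
  shows "has_K_minor (H_edges t) (line_graph_E (H_edges t) H_ends) t"
proof -
  let ?E = "line_graph_E (H_edges t) H_ends"
  let ?Y = "UA ` {1..t-3} \<union> {BW}"
  have rest: "H_edges t - ?Y = AV ` {1..t-3} \<union> {UB, VW1, VW2}"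
    unfolding H_edges_def by auto
  have "card (AV ` {1..t-3} \<union> {UB, VW1, VW2}) = (t - 3) + 3"
    by (subst card_Un_disjoint) (auto simp: card_image inj_on_def)
  with rest \<open>t \<ge> 5\<close> have "card (H_edges t - ?Y) = t"
    by simp
  moreover have "has_K_minor (H_edges t) ?E (card (H_edges t - ?Y))"
  proof (rule has_K_minor_contract_star[where x = UB])
    show "\<forall>y\<in>?Y. {UB, y} \<in> ?E"
      by (auto simp: line_graph_E_doubleton_iff H_edges_def)
    show "\<forall>a\<in>H_edges t - ?Y - {UB}. \<forall>b\<in>H_edges t - ?Y - {UB}. a \<noteq> b \<longrightarrow> {a, b} \<in> ?E"
      unfolding rest by (auto simp: line_graph_E_doubleton_iff H_edges_def)
    show "\<forall>b\<in>H_edges t - ?Y - {UB}. \<exists>c\<in>insert UB ?Y. {c, b} \<in> ?E"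
      unfolding rest by (auto simp: line_graph_E_doubleton_iff H_edges_def)
  qed (auto simp: H_edges_def dest: line_graph_E_edge)
  ultimately show ?thesis
    by simp
qed

lemma path_edges_subset: "is_path V E p \<Longrightarrow> path_edges p \<subseteq> E"
  unfolding is_path_def path_edges_def by auto

lemma path_end_in_path_edge:
  assumes "is_path V E p" "hd p \<noteq> last p" "v \<in> {hd p, last p}"
  obtains e where "e \<in> path_edges p" "v \<in> e"
proof -
  have "p \<noteq> []"
    using assms(1) unfolding is_path_def by simp
  then have long: "Suc 0 < length p"
    using assms(2) by (cases p) auto
  have edge: "{p ! i, p ! Suc i} \<in> path_edges p" if "Suc i < length p" for i
    unfolding path_edges_def using that by blast
  have "{p ! 0, p ! 1} \<in> path_edges p" "{p ! (length p - 2), p ! (length p - 1)} \<in> path_edges p"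
    using edge[of 0] edge[of "length p - 2"] long by (simp_all add: Suc_diff_Suc numeral_2_eq_2)
  moreover have "hd p = p ! 0" "last p = p ! (length p - 1)"
    using \<open>p \<noteq> []\<close> by (simp_all add: hd_conv_nth last_conv_nth)
  ultimately show ?thesis
    using that assms(3) by blast
qed

definition degree :: "'a set set \<Rightarrow> 'a \<Rightarrow> nat" where
  "degree E v = card {e \<in> E. v \<in> e}"

lemma degree_line_graph_E:
  assumes "e \<in> Ed"
  shows "degree (line_graph_E Ed ends) e = card {f \<in> Ed. f \<noteq> e \<and> ends e \<inter> ends f \<noteq> {}}"
proof -
  let ?N = "{f \<in> Ed. f \<noteq> e \<and> ends e \<inter> ends f \<noteq> {}}"
  have "{g \<in> line_graph_E Ed ends. e \<in> g} = (\<lambda>f. {e, f}) ` ?N"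
  proof (intro equalityI subsetI)
    fix g assume "g \<in> {g \<in> line_graph_E Ed ends. e \<in> g}"
    then show "g \<in> (\<lambda>f. {e, f}) ` ?N"
      by (auto elim!: line_graph_E_edgeE simp: Int_commute insert_commute)
  qed (use assms in \<open>auto simp: line_graph_E_doubleton_iff\<close>)
  moreover have "inj_on (\<lambda>f. {e, f}) ?N"
    by (rule inj_onI) (auto simp: doubleton_eq_iff)
  ultimately show ?thesis
    unfolding degree_def by (simp add: card_image)
qed

lemma immersion_branch_degree:
  assumes "finite E" and inj: "inj_on \<phi> {..<t}"
    and paths: "\<forall>i j. i < j \<and> j < t \<longrightarrow> is_path V E (P i j) \<and> hd (P i j) = \<phi> i \<and> last (P i j) = \<phi> j"
    and disjoint: "\<forall>i j k l. i < j \<and> j < t \<and> k < l \<and> l < t \<and> (i, j) \<noteq> (k, l) \<longrightarrow>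
        path_edges (P i j) \<inter> path_edges (P k l) = {}"
    and "k < t"
  shows "t - 1 \<le> degree E (\<phi> k)"
proof -
  define J where "J = {..<t} - {k}"
  define Q where "Q j = P (min k j) (max k j)" for j
  have Q: "is_path V E (Q j) \<and> hd (Q j) \<noteq> last (Q j) \<and> \<phi> k \<in> {hd (Q j), last (Q j)}"
    if "j \<in> J" for j
  proof -
    have "min k j < max k j" "max k j < t" "\<phi> k \<in> {\<phi> (min k j), \<phi> (max k j)}"
      using that \<open>k < t\<close> unfolding J_def by (auto simp: min_def max_def)
    moreover have "\<phi> (min k j) \<noteq> \<phi> (max k j)"
      using inj_onD[OF inj] \<open>min k j < max k j\<close> \<open>max k j < t\<close> by fastforce
    ultimately show ?thesis
      using paths[rule_format, of "min k j" "max k j"] unfolding Q_def by auto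
  qed
  have "\<forall>j \<in> J. \<exists>e. e \<in> path_edges (Q j) \<and> \<phi> k \<in> e"
  proof
    fix j assume "j \<in> J"
    with Q have "is_path V E (Q j)" "hd (Q j) \<noteq> last (Q j)" "\<phi> k \<in> {hd (Q j), last (Q j)}"
      by auto
    then obtain e where "e \<in> path_edges (Q j)" "\<phi> k \<in> e"
      by (rule path_end_in_path_edge)
    then show "\<exists>e. e \<in> path_edges (Q j) \<and> \<phi> k \<in> e"
      by blast
  qed
  then obtain g where g: "\<And>j. j \<in> J \<Longrightarrow> g j \<in> path_edges (Q j) \<and> \<phi> k \<in> g j"
    by (metis bchoice)
  have "inj_on g J"
  proof (rule inj_onI, rule ccontr)
    fix j j' assume "j \<in> J" "j' \<in> J" "g j = g j'" "j \<noteq> j'"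
    then have "(min k j, max k j) \<noteq> (min k j', max k j')"
      by (auto simp: J_def min_def max_def split: if_splits)
    moreover have "g j \<in> path_edges (Q j) \<inter> path_edges (Q j')"
      using g[of j] g[of j'] \<open>j \<in> J\<close> \<open>j' \<in> J\<close> \<open>g j = g j'\<close> by simp
    moreover have "min k j < max k j" "max k j < t" "min k j' < max k j'" "max k j' < t"
      using \<open>j \<in> J\<close> \<open>j' \<in> J\<close> \<open>k < t\<close> by (auto simp: J_def)
    ultimately show False
      using disjoint unfolding Q_def by blast
  qed
  moreover have "g ` J \<subseteq> {e \<in> E. \<phi> k \<in> e}"
    using g Q path_edges_subset by blast
  ultimately have "card J \<le> degree E (\<phi> k)"
    unfolding degree_def using \<open>finite E\<close> by (simp add: card_image[symmetric] card_mono)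
  then show ?thesis
    using \<open>k < t\<close> by (simp add: J_def)
qed

lemma card_immersion_branch_le:
  assumes "has_K_immersion V E t" "finite V" "finite E"
  shows "t \<le> card {v \<in> V. t - 1 \<le> degree E v}"
proof -
  obtain \<phi> P where inj: "inj_on \<phi> {..<t}" and "\<phi> ` {..<t} \<subseteq> V"
    and paths: "\<forall>i j. i < j \<and> j < t \<longrightarrow> is_path V E (P i j) \<and> hd (P i j) = \<phi> i \<and> last (P i j) = \<phi> j"
    and disjoint: "\<forall>i j k l. i < j \<and> j < t \<and> k < l \<and> l < t \<and> (i, j) \<noteq> (k, l) \<longrightarrow>
        path_edges (P i j) \<inter> path_edges (P k l) = {}"
    using assms(1) unfolding has_K_immersion_def by (elim exE conjE)
  then have "\<phi> ` {..<t} \<subseteq> {v \<in> V. t - 1 \<le> degree E v}"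
    using immersion_branch_degree[OF \<open>finite E\<close> inj paths disjoint] by auto
  then have "card (\<phi> ` {..<t}) \<le> card {v \<in> V. t - 1 \<le> degree E v}"
    using \<open>finite V\<close> by (simp add: card_mono)
  then show ?thesis
    using card_image[OF inj] by simp
qed

lemma H_ends_neighbours:
  "{f \<in> H_edges t. f \<noteq> UA i \<and> H_ends (UA i) \<inter> H_ends f \<noteq> {}} \<subseteq> UA ` ({1..t-3} - {i}) \<union> {UB, AV i}"
  "{f \<in> H_edges t. f \<noteq> UB \<and> H_ends UB \<inter> H_ends f \<noteq> {}} \<subseteq> UA ` {1..t-3} \<union> {BW}"
  "{f \<in> H_edges t. f \<noteq> BW \<and> H_ends BW \<inter> H_ends f \<noteq> {}} \<subseteq> {UB, VW1, VW2}"
  unfolding H_edges_def by auto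

lemma degree_H_le:
  assumes "t \<ge> 5" "e \<in> H_edges t" "e \<notin> AV ` {1..t-3} \<union> {VW1, VW2}"
  shows "degree (line_graph_E (H_edges t) H_ends) e \<le> t - 2"
proof -
  let ?N = "{f \<in> H_edges t. f \<noteq> e \<and> H_ends e \<inter> H_ends f \<noteq> {}}"
  have "degree (line_graph_E (H_edges t) H_ends) e = card ?N"
    using assms(2) by (rule degree_line_graph_E)
  moreover consider (ua) i where "e = UA i" "i \<in> {1..t-3}" | (ub) "e = UB" | (bw) "e = BW"
    using assms(2,3) unfolding H_edges_def by auto
  then have "card ?N \<le> t - 2"
  proof cases
    case ua
    then have "card ?N \<le> card (UA ` ({1..t-3} - {i}) \<union> {UB, AV i})"
      using H_ends_neighbours(1) by (intro card_mono) auto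
    also have "\<dots> \<le> (t - 4) + 2"
      using ua(2) card_image_le[of "{1..t-3} - {i}" UA] by (intro card_Un_le[THEN order_trans]) auto
    finally show ?thesis
      using \<open>t \<ge> 5\<close> by simp
  next
    case ub
    then have "card ?N \<le> card (UA ` {1..t-3} \<union> {BW})"
      using H_ends_neighbours(2) by (intro card_mono) auto
    also have "\<dots> \<le> (t - 3) + 1"
      using card_image_le[of "{1..t-3}" UA] by (intro card_Un_le[THEN order_trans]) auto
    finally show ?thesis
      using \<open>t \<ge> 5\<close> by simp
  next
    case bw
    then have "card ?N \<le> card {UB, VW1, VW2}"
      using H_ends_neighbours(3) by (intro card_mono) auto
    then show ?thesis
      using \<open>t \<ge> 5\<close> by simp
  qed
  ultimately show ?thesis
    by simp
qed

lemma no_K_immersion_H: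
  assumes "t \<ge> 5"
  shows "\<not> has_K_immersion (H_edges t) (line_graph_E (H_edges t) H_ends) t"
proof
  let ?E = "line_graph_E (H_edges t) H_ends"
  assume "has_K_immersion (H_edges t) ?E t"
  moreover have "finite (H_edges t)"
    unfolding H_edges_def by simp
  ultimately have "t \<le> card {e \<in> H_edges t. t - 1 \<le> degree ?E e}"
    using card_immersion_branch_le finite_line_graph_E by blast
  also have "\<dots> \<le> card (AV ` {1..t-3} \<union> {VW1, VW2})"
  proof (rule card_mono)
    show "{e \<in> H_edges t. t - 1 \<le> degree ?E e} \<subseteq> AV ` {1..t-3} \<union> {VW1, VW2}"
      using degree_H_le[OF assms] assms by fastforce
  qed simp
  also have "\<dots> \<le> (t - 3) + 2"
    using card_image_le[of "{1..t-3}" AV] by (intro card_Un_le[THEN order_trans]) auto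
  finally show False
    using assms by simp
qed

theorem mainTheorem7:
  fixes t :: nat
  assumes "t \<ge> 5"
  shows "has_K_minor (H_edges t) (line_graph_E (H_edges t) H_ends) t \<and>
         \<not> has_K_immersion (H_edges t) (line_graph_E (H_edges t) H_ends) t"
  using assms by (intro conjI K_minor_H no_K_immersion_H)

end
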